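(* Let $\beta_\bullet\in\{\beta,\beta_v\}$, let $\to_{\beta_\bullet}$ be the contextual closure of the rule $\beta_\bullet$ on $\Lambda_{\mathcal O}$, and let $\rightsquigarrow_U$ be the unbiased iteration of an associated surface reduction (as defined in the context). Then $\rightsquigarrow_U$ is a normalizing strategy for $\to_{\beta_\bullet}$.
   Context: Terms: $M::=x\mid\lambda x.M\mid MM\mid \mathsf{op}(M,\dots,M)$, $\mathsf{op}$ ranging over a (possibly empty) set $\mathcal O$ of operator symbols with fixed arities, up to renaming of bound variables; this set is $\Lambda_{\mathcal O}$. Values $V::=x\mid\lambda x.M$. Contexts $C::=[\,]\mid MC\mid CM\mid\lambda x.C\mid\mathsf{op}(M,\dots,C,\dots,M)$. Rules $(\lambda x.M)N\mapsto_\beta M\{N/x\}$; $(\lambda x.M)V\mapsto_{\beta_v}M\{V/x\}$ ($V$ a value); $\to_{\beta_\bullet}$ is the closure under all contexts. Head contexts $H::=[\,]\mid\lambda x.H\mid HM$; weak $W::=[\,]\mid WM\mid MW$; left $L::=[\,]\mid LM\mid VL$; right $R::=[\,]\mid MR\mid RV$. Surface reduction $\to_s$: for $\beta$, closure of $\beta$ under head contexts; for $\beta_v$, closure of $\beta_v$ under weak, or left, or right contexts (any one choice). $\rightsquigarrow_U$ is defined inductively: if $M\to_sM'$ then $M\rightsquigarrow_UM'$; if $M$ is $\to_s$-normal: $\lambda x.P\rightsquigarrow_U\lambda x.P'$ if $P\rightsquigarrow_UP'$; $PQ\rightsquigarrow_UP'Q$ if $P\rightsquigarrow_UP'$; $PQ\rightsquigarrow_UPQ'$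 if $Q\rightsquigarrow_UQ'$; $\mathsf{op}(\dots,P_i,\dots)\rightsquigarrow_U\mathsf{op}(\dots,P_i',\dots)$ if $P_i\rightsquigarrow_UP_i'$. A relation $\rightsquigarrow\subseteq\to$ is a normalizing strategy for $\to$ if it has the same normal forms as $\to$ and, whenever $t$ has a $\to$-normal form (i.e. $t\to^*u$ with $u$ $\to$-normal), every maximal $\rightsquigarrow$-sequence from $t$ (infinite, or finite ending in a $\rightsquigarrow$-normal form) ends in a $\to$-normal form. *)

theory Defs
  imports Main
begin

datatype 'o tm = Var nat | Lam "'o tm" | App "'o tm" "'o tm" | Op 'o "'o tm list"

primrec wf :: "'o set \<Rightarrow> ('o \<Rightarrow> nat) \<Rightarrow> 'o tm \<Rightarrow> bool" where
  "wf Ops ar (Var i) = True"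
| "wf Ops ar (Lam t) = wf Ops ar t"
| "wf Ops ar (App s t) = (wf Ops ar s \<and> wf Ops ar t)"
| "wf Ops ar (Op g ts) = (g \<in> Ops \<and> length ts = ar g \<and> list_all (wf Ops ar) ts)"

primrec lift :: "nat \<Rightarrow> 'o tm \<Rightarrow> 'o tm" where
  "lift k (Var i) = (if i < k then Var i else Var (Suc i))"
| "lift k (Lam t) = Lam (lift (Suc k) t)"
| "lift k (App s t) = App (lift k s) (lift k t)"
| "lift k (Op g ts) = Op g (map (lift k) ts)"

text \<open>subst t k u = t{u/k}, removing the bound index k.\<close>
primrec subst :: "'o tm \<Rightarrow> nat \<Rightarrow> 'o tm \<Rightarrow> 'o tm" where
  "subst (Var i) k u = (if i < k then Var i else if i = k then u else Var (i - 1))"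
| "subst (Lam t) k u = Lam (subst t (Suc k) (lift 0 u))"
| "subst (App s t) k u = App (subst s k u) (subst t k u)"
| "subst (Op g ts) k u = Op g (map (\<lambda>t. subst t k u) ts)"

fun is_val :: "'o tm \<Rightarrow> bool" where
  "is_val (Var _) = True"
| "is_val (Lam _) = True"
| "is_val _ = False"

datatype calculus = Beta | BetaV

fun root :: "calculus \<Rightarrow> 'o tm \<Rightarrow> 'o tm \<Rightarrow> bool" where
  "root Beta (App (Lam M) N) P = (P = subst M 0 N)"
| "root BetaV (App (Lam M) N) P = (is_val N \<and> P = subst M 0 N)"
| "root _ _ _ = False"

inductive red :: "calculus \<Rightarrow> 'o tm \<Rightarrow> 'o tm \<Rightarrow> bool" for c where
  red_root: "root c M M' \<Longrightarrow> red c M M'"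
| red_lam: "red c M M' \<Longrightarrow> red c (Lam M) (Lam M')"
| red_appL: "red c M M' \<Longrightarrow> red c (App M N) (App M' N)"
| red_appR: "red c N N' \<Longrightarrow> red c (App M N) (App M N')"
| red_op: "red c M M' \<Longrightarrow> red c (Op g (xs @ M # ys)) (Op g (xs @ M' # ys))"

text \<open>Choice of surface contexts: head contexts (for beta), or weak / left / right contexts (for beta_v).\<close>
datatype surface = Head | Weak | Left | Right

inductive sred :: "calculus \<Rightarrow> surface \<Rightarrow> 'o tm \<Rightarrow> 'o tm \<Rightarrow> bool" for c sf where
  s_root: "root c M M' \<Longrightarrow> sred c sf M M'"
| s_head_lam: "sf = Head \<Longrightarrow> sred c sf M M' \<Longrightarrow> sred c sf (Lam M) (Lam M')"
| s_head_app: "sf = Head \<Longrightarrow> sred c sf M M' \<Longrightarrow> sred c sf (App M N) (App M' N)"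
| s_weak_appL: "sf = Weak \<Longrightarrow> sred c sf M M' \<Longrightarrow> sred c sf (App M N) (App M' N)"
| s_weak_appR: "sf = Weak \<Longrightarrow> sred c sf N N' \<Longrightarrow> sred c sf (App M N) (App M N')"
| s_left_appL: "sf = Left \<Longrightarrow> sred c sf M M' \<Longrightarrow> sred c sf (App M N) (App M' N)"
| s_left_appR: "sf = Left \<Longrightarrow> is_val V \<Longrightarrow> sred c sf N N' \<Longrightarrow> sred c sf (App V N) (App V N')"
| s_right_appR: "sf = Right \<Longrightarrow> sred c sf N N' \<Longrightarrow> sred c sf (App M N) (App M N')"
| s_right_appL: "sf = Right \<Longrightarrow> is_val V \<Longrightarrow> sred c sf M M' \<Longrightarrow> sred c sf (App M V) (App M' V)"

definition normal :: "('a \<Rightarrow> 'a \<Rightarrow> bool) \<Rightarrow> 'a \<Rightarrow> bool" where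
  "normal r t \<longleftrightarrow> (\<nexists>u. r t u)"

fun admissible :: "calculus \<Rightarrow> surface \<Rightarrow> bool" where
  "admissible Beta sf = (sf = Head)"
| "admissible BetaV sf = (sf \<noteq> Head)"

inductive ured :: "calculus \<Rightarrow> surface \<Rightarrow> 'o tm \<Rightarrow> 'o tm \<Rightarrow> bool" for c sf where
  u_surf: "sred c sf M M' \<Longrightarrow> ured c sf M M'"
| u_lam: "normal (sred c sf) (Lam P) \<Longrightarrow> ured c sf P P' \<Longrightarrow> ured c sf (Lam P) (Lam P')"
| u_appL: "normal (sred c sf) (App P Q) \<Longrightarrow> ured c sf P P' \<Longrightarrow> ured c sf (App P Q) (App P' Q)"
| u_appR: "normal (sred c sf) (App P Q) \<Longrightarrow> ured c sf Q Q' \<Longrightarrow> ured c sf (App P Q) (App P Q')"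
| u_op: "normal (sred c sf) (Op g (xs @ P # ys)) \<Longrightarrow> ured c sf P P' \<Longrightarrow>
          ured c sf (Op g (xs @ P # ys)) (Op g (xs @ P' # ys))"

definition normalizing_strategy_on :: "'a set \<Rightarrow> ('a \<Rightarrow> 'a \<Rightarrow> bool) \<Rightarrow> ('a \<Rightarrow> 'a \<Rightarrow> bool) \<Rightarrow> bool" where
  "normalizing_strategy_on A s r \<longleftrightarrow>
     (\<forall>t\<in>A. \<forall>u. s t u \<longrightarrow> r t u) \<and>
     (\<forall>t\<in>A. normal s t \<longleftrightarrow> normal r t) \<and>
     (\<forall>t\<in>A. (\<exists>u. r\<^sup>*\<^sup>* t u \<and> normal r u) \<longrightarrow>
        (\<nexists>f. f 0 = t \<and> (\<forall>n. s (f n) (f (Suc n)))) \<and>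
        (\<forall>u. s\<^sup>*\<^sup>* t u \<and> normal s u \<longrightarrow> normal r u))"

end

theory Submission
  imports Defs
begin

(* If t has a normal form n, factorization splits t \<rightarrow>* n into surface steps followed by
   internal parallel steps, t \<rightarrow>s* t0 \<Rightarrow>i* n.  Surface redexes persist along internal steps,
   so t0 is surface normal because n is.  Surface reduction is quasi-diamond, hence every
   surface sequence from t reaches t0 after the same number of steps.  From the surface normal
   t0 the unbiased iteration only reduces inside immediate subterms, each of which reduces to
   the corresponding, strictly smaller subterm of n; induction on n shows that these, hence
   t0 and t, admit no infinite unbiased reduction sequence. *)

section \<open>Abstract reduction\<close>

lemma rtranclp_map:
  "r\<^sup>*\<^sup>* x y \<Longrightarrow> (\<And>a b. r a b \<Longrightarrow> s (f a) (f b)) \<Longrightarrow> s\<^sup>*\<^sup>* (f x) (f y)"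
  by (induct rule: rtranclp_induct) (auto intro: rtranclp.rtrancl_into_rtrancl)

definition quasi_diamond :: "('a \<Rightarrow> 'a \<Rightarrow> bool) \<Rightarrow> bool" where
  "quasi_diamond r \<longleftrightarrow> (\<forall>t u1 u2. r t u1 \<longrightarrow> r t u2 \<longrightarrow> u1 \<noteq> u2 \<longrightarrow> (\<exists>v. r u1 v \<and> r u2 v))"

lemma quasi_diamond_relpowp_normal:
  assumes "quasi_diamond r" "(r ^^ k) t n" "normal r n" "r t u"
  shows "\<exists>j. k = Suc j \<and> (r ^^ j) u n"
  using assms(2-)
proof (induct k arbitrary: t u)
  case 0
  then show ?case by (auto simp: normal_def)
next
  case (Suc j)
  then obtain t1 where t1: "r t t1" "(r ^^ j) t1 n" by (blast dest: relpowp_Suc_D2)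
  show ?case
  proof (cases "u = t1")
    case False
    then obtain v where "r u v" "r t1 v"
      using assms(1) t1(1) Suc.prems(3) unfolding quasi_diamond_def by blast
    with Suc.hyps[OF t1(2) Suc.prems(2)] show ?thesis by (auto intro: relpowp_Suc_I2)
  qed (use t1 in simp)
qed

(* Uniform normalization: by the quasi-diamond property every r-step from t stays at the same
   distance from the normal form n, and s-steps from r-reducible terms are r-steps. *)
lemma quasi_diamond_termip:
  assumes "quasi_diamond r" "r\<^sup>*\<^sup>* t n" "normal r n"
    and "\<And>x y. s x y \<Longrightarrow> \<not> normal r x \<Longrightarrow> r x y" and "termip s n"
  shows "termip s t"
proof -
  obtain k where "(r ^^ k) t n" using assms(2) by (blast dest: rtranclp_imp_relpowp)
  then show ?thesis
  proof (induct k arbitrary: t)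
    case (Suc k)
    show ?case
    proof (rule accpI)
      fix u assume "s\<inverse>\<inverse> u t"
      moreover have "\<not> normal r t" using relpowp_Suc_D2[OF Suc.prems] by (auto simp: normal_def)
      ultimately have "r t u" using assms(4) by blast
      then have "(r ^^ k) u n"
        using quasi_diamond_relpowp_normal[OF assms(1) Suc.prems assms(3)] by simp
      then show "termip s u" by (rule Suc.hyps)
    qed
  qed (simp add: assms(5))
qed

lemma termip_imp_no_infinite_chain:
  assumes "termip r t"
  shows "\<nexists>f. f 0 = t \<and> (\<forall>n. r (f n) (f (Suc n)))"
  using assms
proof (induct rule: accp.induct)
  case (accI x)
  show ?case
  proof
    assume "\<exists>f. f 0 = x \<and> (\<forall>n. r (f n) (f (Suc n)))"
    then obtain f where f: "f 0 = x" "\<forall>n. r (f n) (f (Suc n))" by blast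
    then have "r x (f (Suc 0))" using f(2)[rule_format, of 0] by simp
    moreover have "\<exists>g. g 0 = f (Suc 0) \<and> (\<forall>n. r (g n) (g (Suc n)))"
      using f(2) by (intro exI[of _ "\<lambda>n. f (Suc n)"]) simp
    ultimately show False using accI.hyps(2) by simp
  qed
qed

lemma lift_lift:
  "i < k + 1 \<Longrightarrow> lift (Suc k) (lift i t) = lift i (lift k t)"
  by (induct t arbitrary: i k) auto

lemma lift_subst [simp]:
  "j < i + 1 \<Longrightarrow> lift i (subst t j s) = subst (lift (i + 1) t) j (lift i s)"
  by (induct t arbitrary: i j s) (simp_all add: diff_Suc lift_lift split: nat.split)

lemma lift_subst_lt:
  "i < j + 1 \<Longrightarrow> lift i (subst t j s) = subst (lift i t) (j + 1) (lift i s)"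
  by (induct t arbitrary: i j s) (auto simp add: lift_lift)

lemma subst_lift [simp]: "subst (lift k t) k s = t"
  by (induct t arbitrary: k s) (simp_all add: map_idI)

lemma subst_subst:
  "i < j + 1 \<Longrightarrow> subst (subst t (Suc j) (lift i v)) i (subst u j v) = subst (subst t i u) j v"
  by (induct t arbitrary: i j u v)
    (simp_all add: diff_Suc lift_lift [symmetric] lift_subst_lt split: nat.split)

fun is_lam :: "'o tm \<Rightarrow> bool" where
  "is_lam (Lam _) = True"
| "is_lam _ = False"

lemma is_lam_imp_is_val: "is_lam t \<Longrightarrow> is_val t"
  by (cases t) auto

lemma is_val_lift [simp]: "is_val (lift k t) = is_val t"
  by (cases t) auto

lemma is_val_subst_iff: "is_val u \<Longrightarrow> is_val (subst t k u) = is_val t"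
  by (cases t) auto

lemma root_iff:
  "root c M M' \<longleftrightarrow> (\<exists>A B. M = App (Lam A) B \<and> M' = subst A 0 B \<and> (c = BetaV \<longrightarrow> is_val B))"
  by (cases "(c, M, M')" rule: root.cases) auto

lemma rootI: "(c = BetaV \<longrightarrow> is_val B) \<Longrightarrow> root c (App (Lam A) B) (subst A 0 B)"
  by (cases c) auto

section \<open>Parallel reduction\<close>

inductive par :: "calculus \<Rightarrow> 'o tm \<Rightarrow> 'o tm \<Rightarrow> bool" for c where
  par_var: "par c (Var i) (Var i)"
| par_lam: "par c M M' \<Longrightarrow> par c (Lam M) (Lam M')"
| par_app: "par c M M' \<Longrightarrow> par c N N' \<Longrightarrow> par c (App M N) (App M' N')"
| par_op: "list_all2 (par c) ts ts' \<Longrightarrow> par c (Op g ts) (Op g ts')"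
| par_beta: "par c M M' \<Longrightarrow> par c N N' \<Longrightarrow> (c = BetaV \<longrightarrow> is_val N) \<Longrightarrow>
    par c (App (Lam M) N) (subst M' 0 N')"
monos list_all2_mono

lemma par_refl [simp, intro]: "par c t t"
  by (induct t) (auto intro: par.intros list.rel_refl_strong)

lemma par_is_val: "par c V V' \<Longrightarrow> is_val V \<Longrightarrow> is_val V'"
  by (induct rule: par.induct) auto

lemma par_is_lam: "par c M M' \<Longrightarrow> is_lam M \<Longrightarrow> is_lam M'"
  by (induct rule: par.induct) auto

lemma par_LamE: "par c (Lam A) T \<Longrightarrow> (\<And>A'. T = Lam A' \<Longrightarrow> par c A A' \<Longrightarrow> P) \<Longrightarrow> P"
  by (cases rule: par.cases) auto

lemma par_lift: "par c M M' \<Longrightarrow> par c (lift k M) (lift k M')"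
proof (induct arbitrary: k rule: par.induct)
  case (par_op ts ts' g)
  then show ?case
    by (auto intro!: par.par_op simp: list_all2_map1 list_all2_map2 elim!: list_all2_mono)
next
  case (par_beta M M' N N')
  then show ?case using par.par_beta[of c "lift (Suc k) M" "lift (Suc k) M'" "lift k N" "lift k N'"]
    by simp
qed (auto intro: par.intros)

lemma par_subst:
  "par c M M' \<Longrightarrow> par c N N' \<Longrightarrow> (c = BetaV \<longrightarrow> is_val N) \<Longrightarrow> par c (subst M j N) (subst M' j N')"
proof (induct arbitrary: j N N' rule: par.induct)
  case (par_lam M M')
  have "par c (subst M (Suc j) (lift 0 N)) (subst M' (Suc j) (lift 0 N'))"
    using par_lam by (intro par_lam.hyps(2)) (auto intro: par_lift)
  then show ?case by (auto intro: par.par_lam)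
next
  case (par_op ts ts' g)
  then show ?case
    by (auto intro!: par.par_op simp: list_all2_map1 list_all2_map2 elim!: list_all2_mono)
next
  case (par_beta M M' B B')
  have "par c (subst M (Suc j) (lift 0 N)) (subst M' (Suc j) (lift 0 N'))"
    using par_beta by (intro par_beta.hyps(2)) (auto intro: par_lift)
  then have "par c (App (Lam (subst M (Suc j) (lift 0 N))) (subst B j N))
      (subst (subst M' (Suc j) (lift 0 N')) 0 (subst B' j N'))"
    using par_beta by (intro par.par_beta) (auto intro: par_lift simp: is_val_subst_iff)
  then show ?case using subst_subst[of 0 j M' N' B'] by simp
qed (auto intro: par.intros)

lemma red_imp_par: "red c M M' \<Longrightarrow> par c M M'"
proof (induct rule: red.induct)
  case (red_root M M')
  then show ?case by (auto simp: root_iff intro: par.intros)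
next
  case (red_op M M' g xs ys)
  then show ?case by (auto intro!: par.par_op list_all2_appendI list.rel_refl_strong)
qed (auto intro: par.intros)

lemma reds_op: "list_all2 (red c)\<^sup>*\<^sup>* ts ts' \<Longrightarrow> (red c)\<^sup>*\<^sup>* (Op g (xs @ ts)) (Op g (xs @ ts'))"
proof (induct arbitrary: xs rule: list_all2_induct)
  case (Cons t ts t' ts')
  have "(red c)\<^sup>*\<^sup>* (Op g (xs @ t # ts)) (Op g (xs @ t' # ts))"
    using Cons(1) by (rule rtranclp_map[where f="\<lambda>t. Op g (xs @ t # ts)"]) (rule red_op)
  also have "(red c)\<^sup>*\<^sup>* (Op g (xs @ t' # ts)) (Op g (xs @ t' # ts'))"
    using Cons(3)[of "xs @ [t']"] by simp
  finally show ?case by simp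
qed simp

lemma par_imp_reds: "par c M M' \<Longrightarrow> (red c)\<^sup>*\<^sup>* M M'"
proof (induct rule: par.induct)
  case (par_lam M M')
  show ?case using par_lam(2) by (rule rtranclp_map[where f=Lam]) (rule red_lam)
next
  case (par_app M M' N N')
  have "(red c)\<^sup>*\<^sup>* (App M N) (App M' N)"
    using par_app(2) by (rule rtranclp_map[where f="\<lambda>t. App t N"]) (rule red_appL)
  also have "(red c)\<^sup>*\<^sup>* (App M' N) (App M' N')"
    using par_app(4) by (rule rtranclp_map[where f="App M'"]) (rule red_appR)
  finally show ?case .
next
  case (par_op ts ts' g)
  then have "list_all2 (red c)\<^sup>*\<^sup>* ts ts'" by (auto elim!: list_all2_mono)
  then show ?case using reds_op[of c ts ts' g "[]"] by simp
next
  case (par_beta M M' N N')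
  have "(red c)\<^sup>*\<^sup>* (App (Lam M) N) (App (Lam M') N)"
    using par_beta(2)
    by (rule rtranclp_map[where f="\<lambda>t. App (Lam t) N"]) (blast intro: red_lam red_appL)
  also have "(red c)\<^sup>*\<^sup>* (App (Lam M') N) (App (Lam M') N')"
    using par_beta(4) by (rule rtranclp_map[where f="App (Lam M')"]) (rule red_appR)
  also have "red c (App (Lam M') N') (subst M' 0 N')"
    using par_beta par_is_val by (auto intro!: red_root rootI)
  finally show ?case .
qed simp

section \<open>Surface reduction\<close>

lemma admissible_BetaV: "admissible c sf \<Longrightarrow> sf \<noteq> Head \<Longrightarrow> c = BetaV"
  by (cases c) auto

lemma admissible_Beta: "admissible c Head \<Longrightarrow> c = Beta"
  by (cases c) auto

lemma sred_imp_red: "sred c sf M M' \<Longrightarrow> red c M M'"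
  by (induct rule: sred.induct) (auto intro: red.intros)

lemma sred_lift: "sred c sf M N \<Longrightarrow> sred c sf (lift k M) (lift k N)"
  by (induct arbitrary: k rule: sred.induct) (auto simp: root_iff intro: sred.intros rootI)

lemma sred_subst:
  "sred c sf M M' \<Longrightarrow> admissible c sf \<Longrightarrow> (c = BetaV \<longrightarrow> is_val N) \<Longrightarrow>
   sred c sf (subst M j N) (subst M' j N)"
proof (induct arbitrary: j N rule: sred.induct)
  case (s_root M M')
  then obtain A B where AB: "M = App (Lam A) B" "M' = subst A 0 B" "c = BetaV \<longrightarrow> is_val B"
    by (auto simp: root_iff)
  have "sred c sf (App (Lam (subst A (Suc j) (lift 0 N))) (subst B j N))
     (subst (subst A (Suc j) (lift 0 N)) 0 (subst B j N))"
    using AB s_root by (auto intro!: sred.s_root rootI simp: is_val_subst_iff)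
  then show ?case using AB subst_subst[of 0 j A N B] by simp
qed (auto intro: sred.intros dest: admissible_BetaV simp: is_val_subst_iff)

lemma is_val_sred_Head: "sred c sf t u \<Longrightarrow> is_val t \<Longrightarrow> sf = Head"
  by (induct rule: sred.induct) (auto simp: root_iff)

inductive_cases sred_VarE: "sred c sf (Var i) u"
inductive_cases sred_LamE: "sred c sf (Lam M) u"

lemma sred_AppE:
  assumes "sred c sf (App M N) u"
  obtains (root) "root c (App M N) u"
  | (left) M' where "u = App M' N" "sred c sf M M'" "sf \<noteq> Right \<or> is_val N"
  | (right) N' where "u = App M N'" "sred c sf N N'" "sf = Weak \<or> sf = Right \<or> sf = Left \<and> is_val M"
  using assms by (cases rule: sred.cases) auto

lemma sred_App_left:
  "sred c sf M M' \<Longrightarrow> sf \<noteq> Right \<or> is_val N \<Longrightarrow> sred c sf (App M N) (App M' N)"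
  by (cases sf) (auto intro: sred.intros)

lemma sred_App_right:
  "sred c sf N N' \<Longrightarrow> sf = Weak \<or> sf = Right \<or> sf = Left \<and> is_val M \<Longrightarrow>
   sred c sf (App M N) (App M N')"
  by (auto intro: sred.intros)

lemma sreds_lam_Head: "(sred c sf)\<^sup>*\<^sup>* M M' \<Longrightarrow> sf = Head \<Longrightarrow> (sred c sf)\<^sup>*\<^sup>* (Lam M) (Lam M')"
  by (erule rtranclp_map[where f=Lam]) (auto intro: sred.intros)

lemma sreds_App_left:
  "(sred c sf)\<^sup>*\<^sup>* M M' \<Longrightarrow> sf \<noteq> Right \<or> is_val N \<Longrightarrow> (sred c sf)\<^sup>*\<^sup>* (App M N) (App M' N)"
  by (erule rtranclp_map[where f="\<lambda>t. App t N"]) (rule sred_App_left)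

lemma sreds_App_right:
  "(sred c sf)\<^sup>*\<^sup>* N N' \<Longrightarrow> sf = Weak \<or> sf = Right \<or> sf = Left \<and> is_val M \<Longrightarrow>
   (sred c sf)\<^sup>*\<^sup>* (App M N) (App M N')"
  by (erule rtranclp_map[where f="App M"]) (rule sred_App_right)

lemma root_sred_join:
  assumes "root c t u1" "sred c sf t u2" "u1 \<noteq> u2" "admissible c sf"
  shows "\<exists>v. sred c sf u1 v \<and> sred c sf u2 v"
proof -
  obtain A B where t: "t = App (Lam A) B" and u1: "u1 = subst A 0 B" and B: "c = BetaV \<longrightarrow> is_val B"
    using assms(1) by (auto simp: root_iff)
  have head_step:
    "sred c sf (subst A 0 B) (subst A' 0 B) \<and> sred c sf (App (Lam A') B) (subst A' 0 B)"
    if "sred c sf A A'" "sf = Head" for A'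
    using that assms(4) B by (auto dest: admissible_Beta intro: sred_subst sred.s_root rootI)
  from assms(2)[unfolded t] show ?thesis
    by (cases rule: sred_AppE)
      (use assms(3,4) u1 B head_step in
        \<open>auto simp: root_iff dest: admissible_BetaV is_val_sred_Head elim!: sred_LamE\<close>)
qed

lemma sred_quasi_diamond:
  assumes "admissible c sf"
  shows "quasi_diamond (sred c sf :: 'o tm \<Rightarrow> 'o tm \<Rightarrow> bool)"
proof -
  have root_join: "\<exists>v. sred c sf u1 v \<and> sred c sf u2 v"
    if "root c t u1 \<or> root c t u2" "sred c sf t u1" "sred c sf t u2" "u1 \<noteq> u2"
    for t u1 u2 :: "'o tm"
    using that root_sred_join[OF _ _ _ assms] by metis
  have "\<exists>v. sred c sf u1 v \<and> sred c sf u2 v" if "sred c sf t u1" "sred c sf t u2" "u1 \<noteq> u2"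
    for t u1 u2 :: "'o tm"
    using that
  proof (induct t arbitrary: u1 u2)
    case (Lam M)
    then show ?case by (auto elim!: sred_LamE simp: root_iff intro: sred.s_head_lam)
  next
    case (App M N)
    \<comment> \<open>steps on both sides of an application coexist only in weak contexts, where they commute\<close>
    have left_right: "\<exists>v. sred c sf (App M' N) v \<and> sred c sf (App M N') v"
      if "sred c sf M M'" "sred c sf N N'" "sf \<noteq> Right \<or> is_val N"
        "sf = Weak \<or> sf = Right \<or> sf = Left \<and> is_val M" for M' N'
      using that is_val_sred_Head[of c sf M] is_val_sred_Head[of c sf N]
      by (auto intro!: exI[of _ "App M' N'"] sred_App_left sred_App_right)
    from App.prems(1) show ?case
    proof (cases rule: sred_AppE)
      case (left M')
      from App.prems(2) show ?thesis
        by (cases rule: sred_AppE)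
          (use App left root_join left_right in \<open>blast intro: sred_App_left\<close>)+
    next
      case (right N')
      from App.prems(2) show ?thesis
        by (cases rule: sred_AppE)
          (use App right root_join left_right in \<open>blast intro: sred_App_right\<close>)+
    qed (use App root_join in blast)
  qed (auto elim: sred.cases simp: root_iff)
  then show ?thesis unfolding quasi_diamond_def by blast
qed

section \<open>Factorization\<close>

(* Internal parallel reduction: parallel reduction that contracts no redex in surface position. *)
inductive ipar :: "calculus \<Rightarrow> surface \<Rightarrow> 'o tm \<Rightarrow> 'o tm \<Rightarrow> bool" for c sf where
  ipar_var: "ipar c sf (Var i) (Var i)"
| ipar_lam_Head: "sf = Head \<Longrightarrow> ipar c sf M M' \<Longrightarrow> ipar c sf (Lam M) (Lam M')"
| ipar_lam: "sf \<noteq> Head \<Longrightarrow> par c M M' \<Longrightarrow> ipar c sf (Lam M) (Lam M')"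
| ipar_app_Head: "sf = Head \<Longrightarrow> ipar c sf M M' \<Longrightarrow> par c N N' \<Longrightarrow> ipar c sf (App M N) (App M' N')"
| ipar_app_Weak: "sf = Weak \<Longrightarrow> ipar c sf M M' \<Longrightarrow> ipar c sf N N' \<Longrightarrow> ipar c sf (App M N) (App M' N')"
| ipar_app_Left: "sf = Left \<Longrightarrow> ipar c sf M M' \<Longrightarrow> par c N N' \<Longrightarrow> (is_val M \<longrightarrow> ipar c sf N N') \<Longrightarrow>
    ipar c sf (App M N) (App M' N')"
| ipar_app_Right: "sf = Right \<Longrightarrow> ipar c sf N N' \<Longrightarrow> par c M M' \<Longrightarrow> (is_val N \<longrightarrow> ipar c sf M M') \<Longrightarrow>
    ipar c sf (App M N) (App M' N')"
| ipar_op: "list_all2 (par c) ts ts' \<Longrightarrow> ipar c sf (Op g ts) (Op g ts')"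

inductive_cases ipar_LamE: "ipar c sf (Lam M) N"
inductive_cases ipar_AppE: "ipar c sf (App M1 M2) N"
inductive_cases ipar_OpE: "ipar c sf (Op g ts) N"
inductive_cases ipar_to_LamE: "ipar c sf M (Lam N)"
inductive_cases ipar_to_AppE: "ipar c sf M (App N1 N2)"

lemma ipar_imp_par: "ipar c sf M N \<Longrightarrow> par c M N"
  by (induct rule: ipar.induct) (auto intro: par.intros)

lemma ipar_shape: "ipar c sf M N \<Longrightarrow> is_val N = is_val M \<and> is_lam N = is_lam M"
  by (cases rule: ipar.cases) auto

lemma ipar_lift: "ipar c sf M N \<Longrightarrow> ipar c sf (lift k M) (lift k N)"
proof (induct arbitrary: k rule: ipar.induct)
  case (ipar_op ts ts' g)
  then show ?case
    by (auto intro!: ipar.ipar_op intro: par_lift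
        simp: list_all2_map1 list_all2_map2 elim!: list_all2_mono)
qed (auto intro: ipar.intros par_lift)

lemma par_imp_ipar_Op: "par c (Op g ts) T \<Longrightarrow> ipar c sf (Op g ts) T"
  by (cases rule: par.cases) (auto intro: ipar_op)

lemma par_imp_ipar_Lam: "par c (Lam A) T \<Longrightarrow> sf \<noteq> Head \<Longrightarrow> ipar c sf (Lam A) T"
  by (erule par_LamE) (auto intro: ipar_lam)

lemma factor_lift:
  "((sred c sf)\<^sup>*\<^sup>* OO ipar c sf) N N' \<Longrightarrow> ((sred c sf)\<^sup>*\<^sup>* OO ipar c sf) (lift k N) (lift k N')"
  by (auto intro: rtranclp_map[where f="lift k"] sred_lift ipar_lift)

lemma factor_Lam:
  assumes "sf = Head \<Longrightarrow> ((sred c sf)\<^sup>*\<^sup>* OO ipar c sf) M M'" and "par c M M'"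
  shows "((sred c sf)\<^sup>*\<^sup>* OO ipar c sf) (Lam M) (Lam M')"
  using assms
  by (cases "sf = Head") (auto intro: sreds_lam_Head ipar_lam_Head par_imp_ipar_Lam par_lam)

lemma factor_App_Left:
  assumes "sf = Left" and M: "((sred c sf)\<^sup>*\<^sup>* OO ipar c sf) M M'"
    and N: "is_val M' \<Longrightarrow> ((sred c sf)\<^sup>*\<^sup>* OO ipar c sf) N N'" and "par c N N'"
  shows "((sred c sf)\<^sup>*\<^sup>* OO ipar c sf) (App M N) (App M' N')"
proof -
  from M obtain X where X: "(sred c sf)\<^sup>*\<^sup>* M X" "ipar c sf X M'" by blast
  have MX: "(sred c sf)\<^sup>*\<^sup>* (App M N) (App X N)" using sreds_App_left[OF X(1)] assms(1) by simp
  show ?thesis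
  proof (cases "is_val M'")
    case True
    with N obtain Y where Y: "(sred c sf)\<^sup>*\<^sup>* N Y" "ipar c sf Y N'" by blast
    have "is_val X" using True ipar_shape[OF X(2)] by simp
    then have "(sred c sf)\<^sup>*\<^sup>* (App M N) (App X Y)"
      using MX sreds_App_right[OF Y(1)] assms(1) by (meson rtranclp_trans)
    with X Y assms(1) show ?thesis by (blast intro: ipar_app_Left ipar_imp_par)
  next
    case False
    then have "\<not> is_val X" using ipar_shape[OF X(2)] by simp
    with MX X assms(1,4) show ?thesis by (blast intro: ipar_app_Left)
  qed
qed

lemma factor_App_Right:
  assumes "sf = Right" and M: "is_val N' \<Longrightarrow> ((sred c sf)\<^sup>*\<^sup>* OO ipar c sf) M M'"
    and N: "((sred c sf)\<^sup>*\<^sup>* OO ipar c sf) N N'" and "par c M M'"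
  shows "((sred c sf)\<^sup>*\<^sup>* OO ipar c sf) (App M N) (App M' N')"
proof -
  from N obtain Y where Y: "(sred c sf)\<^sup>*\<^sup>* N Y" "ipar c sf Y N'" by blast
  have NY: "(sred c sf)\<^sup>*\<^sup>* (App M N) (App M Y)" using sreds_App_right[OF Y(1)] assms(1) by simp
  show ?thesis
  proof (cases "is_val N'")
    case True
    with M obtain X where X: "(sred c sf)\<^sup>*\<^sup>* M X" "ipar c sf X M'" by blast
    have "is_val Y" using True ipar_shape[OF Y(2)] by simp
    then have "(sred c sf)\<^sup>*\<^sup>* (App M N) (App X Y)"
      using NY sreds_App_left[OF X(1)] assms(1) by (meson rtranclp_trans)
    with X Y assms(1) show ?thesis by (blast intro: ipar_app_Right ipar_imp_par)
  next
    case False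
    then have "\<not> is_val Y" using ipar_shape[OF Y(2)] by simp
    with NY Y assms(1,4) show ?thesis by (blast intro: ipar_app_Right)
  qed
qed

lemma factor_App:
  assumes M: "sf \<noteq> Right \<or> is_val N' \<Longrightarrow> ((sred c sf)\<^sup>*\<^sup>* OO ipar c sf) M M'"
    and N: "sf = Weak \<or> sf = Right \<or> sf = Left \<and> is_val M' \<Longrightarrow> ((sred c sf)\<^sup>*\<^sup>* OO ipar c sf) N N'"
    and "par c M M'" "par c N N'"
  shows "((sred c sf)\<^sup>*\<^sup>* OO ipar c sf) (App M N) (App M' N')"
proof (cases sf)
  case Head
  with M obtain X where "(sred c sf)\<^sup>*\<^sup>* M X" "ipar c sf X M'" by blast
  with Head \<open>par c N N'\<close> show ?thesis by (blast intro: sreds_App_left ipar_app_Head)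
next
  case Weak
  with M N obtain X Y where X: "(sred c sf)\<^sup>*\<^sup>* M X" "ipar c sf X M'"
    and Y: "(sred c sf)\<^sup>*\<^sup>* N Y" "ipar c sf Y N'" by blast
  have "(sred c sf)\<^sup>*\<^sup>* (App M N) (App X Y)"
    using sreds_App_left[OF X(1), of N] sreds_App_right[OF Y(1), of X] Weak
    by (simp add: rtranclp_trans)
  with X Y Weak show ?thesis by (blast intro: ipar_app_Weak)
next
  case Left
  with assms show ?thesis by (intro factor_App_Left) simp_all
next
  case Right
  with assms show ?thesis by (intro factor_App_Right) simp_all
qed

lemma ipar_subst_factor:
  assumes "ipar c sf M M'" "admissible c sf" "par c N N'" "c = BetaV \<longrightarrow> is_val N"
    and "((sred c sf)\<^sup>*\<^sup>* OO ipar c sf) N N'"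
  shows "((sred c sf)\<^sup>*\<^sup>* OO ipar c sf) (subst M j N) (subst M' j N')"
  using assms
proof (induct arbitrary: j N N' rule: ipar.induct)
  case (ipar_var i)
  then show ?case by (auto intro: ipar.ipar_var)
next
  case (ipar_lam_Head M M')
  have "((sred c sf)\<^sup>*\<^sup>* OO ipar c sf) (subst M (Suc j) (lift 0 N)) (subst M' (Suc j) (lift 0 N'))"
    using ipar_lam_Head by (intro ipar_lam_Head.hyps(3)) (auto intro: par_lift factor_lift)
  moreover have "par c (subst M (Suc j) (lift 0 N)) (subst M' (Suc j) (lift 0 N'))"
    using ipar_lam_Head by (intro par_subst) (auto intro: par_lift ipar_imp_par)
  ultimately show ?case by (auto intro!: factor_Lam)
next
  case (ipar_lam M M')
  have "par c (subst M (Suc j) (lift 0 N)) (subst M' (Suc j) (lift 0 N'))"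
    using ipar_lam by (intro par_subst) (auto intro: par_lift)
  then show ?case using ipar_lam.hyps(1) by (auto intro!: factor_Lam)
next
  case (ipar_app_Head M M' Q Q')
  then show ?case
    by (simp only: subst.simps, intro factor_App) (simp_all add: par_subst ipar_imp_par)
next
  case (ipar_app_Weak M M' Q Q')
  then show ?case
    by (simp only: subst.simps, intro factor_App) (simp_all add: par_subst ipar_imp_par)
next
  case (ipar_app_Left M M' Q Q')
  then have "is_val N" "is_val N'" by (auto dest: admissible_BetaV par_is_val)
  then have "is_val (subst M' j N') \<Longrightarrow> ((sred c sf)\<^sup>*\<^sup>* OO ipar c sf) (subst Q j N) (subst Q' j N')"
    using ipar_app_Left ipar_shape[OF ipar_app_Left.hyps(2)] by (auto simp: is_val_subst_iff)
  with ipar_app_Left show ?case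
    by (simp only: subst.simps, intro factor_App) (simp_all add: par_subst ipar_imp_par)
next
  case (ipar_app_Right Q Q' M M')
  then have "is_val N" "is_val N'" by (auto dest: admissible_BetaV par_is_val)
  then have "is_val (subst Q' j N') \<Longrightarrow> ((sred c sf)\<^sup>*\<^sup>* OO ipar c sf) (subst M j N) (subst M' j N')"
    using ipar_app_Right ipar_shape[OF ipar_app_Right.hyps(2)] by (auto simp: is_val_subst_iff)
  with ipar_app_Right show ?case
    by (simp only: subst.simps, intro factor_App) (simp_all add: par_subst ipar_imp_par)
next
  case (ipar_op ts ts' g)
  have "par c (subst (Op g ts) j N) (subst (Op g ts') j N')"
    using ipar_op by (intro par_subst) (auto intro: par.intros)
  then show ?case by (auto intro!: par_imp_ipar_Op)
qed

lemma par_factor: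
  "par c M M' \<Longrightarrow> admissible c sf \<Longrightarrow> ((sred c sf)\<^sup>*\<^sup>* OO ipar c sf) M M'"
proof (induct rule: par.induct)
  case (par_var i)
  then show ?case by (auto intro: ipar_var)
next
  case (par_op ts ts' g)
  then have "par c (Op g ts) (Op g ts')" by (auto intro!: par.par_op elim!: list_all2_mono)
  then show ?case by (auto intro: par_imp_ipar_Op)
next
  case (par_beta M M' N N')
  then obtain X where X: "(sred c sf)\<^sup>*\<^sup>* M X" "ipar c sf X M'" by blast
  have "sred c sf (App (Lam M) N) (subst M 0 N)"
    using par_beta by (auto intro!: sred.s_root rootI)
  moreover have "(sred c sf)\<^sup>*\<^sup>* (subst M 0 N) (subst X 0 N)"
    using X par_beta by (auto intro: rtranclp_map[where f="\<lambda>t. subst t 0 N"] sred_subst)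
  moreover obtain Y where "(sred c sf)\<^sup>*\<^sup>* (subst X 0 N) Y" "ipar c sf Y (subst M' 0 N')"
    using ipar_subst_factor[OF X(2)] par_beta by blast
  ultimately show ?case by (meson converse_rtranclp_into_rtranclp rtranclp_trans relcomppI)
next
  case (par_lam M M')
  then show ?case by (intro factor_Lam) simp_all
next
  case (par_app M M' N N')
  then show ?case by (intro factor_App) simp_all
qed

lemma ipar_to_Lam: "ipar c sf M (Lam A') \<Longrightarrow> \<exists>A. M = Lam A \<and> par c A A'"
  by (erule ipar_to_LamE) (auto intro: ipar_imp_par)

lemma ipar_to_redex:
  assumes "ipar c sf M (App (Lam A') B')" "admissible c sf" "c = BetaV \<longrightarrow> is_val B'"
  shows "par c M (subst A' 0 B')"
  using assms
  by (cases rule: ipar_to_AppE)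
    (auto dest!: ipar_to_Lam intro!: par_beta dest: ipar_imp_par ipar_shape admissible_BetaV)

lemma ipar_sred_imp_par: "sred c sf N P \<Longrightarrow> ipar c sf M N \<Longrightarrow> admissible c sf \<Longrightarrow> par c M P"
proof (induct arbitrary: M rule: sred.induct)
  case (s_root N P)
  then show ?case by (auto simp: root_iff intro: ipar_to_redex)
qed (auto elim!: ipar_to_AppE ipar_to_LamE intro: par.intros dest: ipar_imp_par ipar_shape)

lemma ipar_sreds_factor:
  "(sred c sf)\<^sup>*\<^sup>* N P \<Longrightarrow> ipar c sf M N \<Longrightarrow> admissible c sf \<Longrightarrow>
   ((sred c sf)\<^sup>*\<^sup>* OO ipar c sf) M P"
proof (induct arbitrary: M rule: converse_rtranclp_induct)
  case (step N N1)
  then have "par c M N1" by (blast intro: ipar_sred_imp_par)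
  with step obtain X1 where X1: "(sred c sf)\<^sup>*\<^sup>* M X1" "ipar c sf X1 N1" by (blast dest: par_factor)
  with step obtain X where "(sred c sf)\<^sup>*\<^sup>* X1 X" "ipar c sf X P" by blast
  with X1 show ?case by (blast intro: rtranclp_trans)
qed blast

theorem reds_factor:
  "(red c)\<^sup>*\<^sup>* t u \<Longrightarrow> admissible c sf \<Longrightarrow> ((sred c sf)\<^sup>*\<^sup>* OO (ipar c sf)\<^sup>*\<^sup>*) t u"
proof (induct rule: converse_rtranclp_induct)
  case (step t t1)
  then obtain t2 where t2: "(sred c sf)\<^sup>*\<^sup>* t1 t2" "(ipar c sf)\<^sup>*\<^sup>* t2 u" by blast
  obtain X where X: "(sred c sf)\<^sup>*\<^sup>* t X" "ipar c sf X t1"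
    using par_factor[OF red_imp_par[OF step(1)] step(4)] by blast
  obtain X' where X': "(sred c sf)\<^sup>*\<^sup>* X X'" "ipar c sf X' t2"
    using ipar_sreds_factor[OF t2(1) X(2) step(4)] by blast
  show ?case using X X' t2 by (meson converse_rtranclp_into_rtranclp rtranclp_trans relcomppI)
qed blast

fun surface_normal :: "calculus \<Rightarrow> surface \<Rightarrow> 'o tm \<Rightarrow> bool" where
  "surface_normal c sf (Var i) = True"
| "surface_normal c sf (Lam M) = (sf = Head \<longrightarrow> surface_normal c sf M)"
| "surface_normal c sf (App M N) = (\<not> (is_lam M \<and> (c = BetaV \<longrightarrow> is_val N)) \<and>
     (case sf of
        Head \<Rightarrow> surface_normal c sf M
      | Weak \<Rightarrow> surface_normal c sf M \<and> surface_normal c sf N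
      | Left \<Rightarrow> surface_normal c sf M \<and> (is_val M \<longrightarrow> surface_normal c sf N)
      | Right \<Rightarrow> surface_normal c sf N \<and> (is_val N \<longrightarrow> surface_normal c sf M)))"
| "surface_normal c sf (Op g ts) = True"

lemma normal_sred_iff: "normal (sred c sf) t \<longleftrightarrow> surface_normal c sf t"
proof
  show "surface_normal c sf t" if "normal (sred c sf) t"
    using that
  proof (induct t)
    case (App M N)
    show ?case
    proof (cases "is_lam M \<and> (c = BetaV \<longrightarrow> is_val N)")
      case True
      then show ?thesis using App.prems
        by (cases M) (auto simp: normal_def intro: sred.s_root rootI)
    next
      case False
      with App show ?thesis by (cases sf) (auto simp: normal_def intro: sred.intros)
    qed
  qed (auto simp: normal_def intro: sred.intros)
  show "normal (sred c sf) t" if "surface_normal c sf t"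
  proof -
    have "\<not> surface_normal c sf t" if "sred c sf t u" for u
      using that by (induct rule: sred.induct) (auto simp: root_iff)
    then show ?thesis using \<open>surface_normal c sf t\<close> by (auto simp: normal_def)
  qed
qed

lemma red_preserves_surface_normal:
  "red c t u \<Longrightarrow> admissible c sf \<Longrightarrow> surface_normal c sf t \<Longrightarrow>
   surface_normal c sf u \<and> is_val u = is_val t \<and> is_lam u = is_lam t"
proof (induct rule: red.induct)
  case (red_root M M')
  then show ?case using normal_sred_iff[of c sf M] by (auto simp: normal_def intro: sred.s_root)
next
  case (red_appL M M' N)
  then show ?case using admissible_BetaV[of c sf] by (cases sf) auto
next
  case (red_appR N N' M)
  then show ?case using admissible_BetaV[of c sf] admissible_Beta[of c] is_lam_imp_is_val[of M]
    by (cases sf) auto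
qed auto

lemma ipar_reflects_surface_normal:
  "ipar c sf M N \<Longrightarrow> surface_normal c sf N \<Longrightarrow> surface_normal c sf M"
  by (induct rule: ipar.induct) (auto dest: ipar_shape par_is_val par_is_lam)

lemma ipars_reflect_surface_normal:
  "(ipar c sf)\<^sup>*\<^sup>* t u \<Longrightarrow> surface_normal c sf u \<Longrightarrow> surface_normal c sf t"
  by (induct rule: converse_rtranclp_induct) (auto intro: ipar_reflects_surface_normal)

section \<open>The unbiased iteration\<close>

lemma ured_imp_red: "ured c sf t u \<Longrightarrow> red c t u"
  by (induct rule: ured.induct) (auto intro: red.intros sred_imp_red)

lemma ured_sred: "ured c sf t u \<Longrightarrow> \<not> normal (sred c sf) t \<Longrightarrow> sred c sf t u"
  by (cases rule: ured.cases) auto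

lemma red_imp_ex_ured: "red c t u \<Longrightarrow> \<exists>u'. ured c sf t u'"
proof (induct rule: red.induct)
  case (red_root M M')
  then show ?case by (blast intro: u_surf s_root)
qed (metis normal_def ured.intros)+

lemma normal_ured_iff: "normal (ured c sf) t \<longleftrightarrow> normal (red c) t"
  unfolding normal_def using red_imp_ex_ured ured_imp_red by blast

inductive_cases ured_VarE: "ured c sf (Var i) u"
inductive_cases ured_LamE: "ured c sf (Lam P) u"
inductive_cases ured_AppE: "ured c sf (App P Q) u"
inductive_cases ured_OpE: "ured c sf (Op g ts) u"

lemma ured_preserves_surface_normal:
  "ured c sf t u \<Longrightarrow> admissible c sf \<Longrightarrow> surface_normal c sf t \<Longrightarrow> surface_normal c sf u"
  using red_preserves_surface_normal ured_imp_red by blast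

lemma termip_ured_Lam:
  assumes "termip (ured c sf) P" "surface_normal c sf (Lam P)" "admissible c sf"
  shows "termip (ured c sf) (Lam P)"
  using assms
proof (induct rule: accp.induct)
  case (accI P)
  show ?case
  proof (rule accpI)
    fix y assume "(ured c sf)\<inverse>\<inverse> y (Lam P)"
    then have y: "ured c sf (Lam P) y" by simp
    have "normal (sred c sf) (Lam P)" using accI.prems(1) by (simp add: normal_sred_iff)
    with y obtain P' where "y = Lam P'" "ured c sf P P'" by (auto elim!: ured_LamE simp: normal_def)
    moreover have "surface_normal c sf y"
      using ured_preserves_surface_normal[OF y] accI.prems by blast
    \<comment> \<open>the hypotheses of \<open>accp.induct\<close> mention the relation eta-expanded\<close>
    ultimately show "termip (ured c sf) y" using accI by (auto simp: conversep_iff[abs_def])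
  qed
qed

lemma termip_ured_App:
  assumes "termip (ured c sf) P" "termip (ured c sf) Q" "surface_normal c sf (App P Q)"
    "admissible c sf"
  shows "termip (ured c sf) (App P Q)"
  using assms
proof (induct arbitrary: Q rule: accp.induct)
  case (accI P)
  note outer_hyps = accI.hyps and outer_prems = accI.prems
  from accI.prems(1) show ?case using accI.prems(2)
  proof (induct rule: accp.induct)
    case (accI Q)
    show ?case
    proof (rule accpI)
      fix y assume "(ured c sf)\<inverse>\<inverse> y (App P Q)"
      then have y: "ured c sf (App P Q) y" by simp
      then have "surface_normal c sf y"
        using ured_preserves_surface_normal accI.prems outer_prems by blast
      moreover have "termip (ured c sf) Q" using accI.hyps(1) by (rule accpI)
      moreover have "normal (sred c sf) (App P Q)"
        using accI.prems(1) by (simp add: normal_sred_iff)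
      ultimately show "termip (ured c sf) y"
        using y outer_prems outer_hyps(2) accI.hyps(2)
        by (auto elim!: ured_AppE simp: normal_def conversep_iff[abs_def]
            simp del: surface_normal.simps)
    qed
  qed
qed

lemma termip_ured_Op:
  assumes "\<forall>x\<in>set ts. termip (ured c sf) x"
  shows "termip (ured c sf) (Op g ts)"
proof -
  let ?R = "{(x, y). (ured c sf)\<inverse>\<inverse> x y}"
  have "ts \<in> Wellfounded.acc (listrel1 ?R)"
    using assms by (intro lists_accD) (simp add: accp_eq_acc in_lists_conv_set)
  then show ?thesis
  proof (induct rule: acc.induct)
    case (accI ts)
    show ?case
    proof (rule accpI)
      fix y assume "(ured c sf)\<inverse>\<inverse> y (Op g ts)"
      then obtain xs P P' ys where "ts = xs @ P # ys" "y = Op g (xs @ P' # ys)" "ured c sf P P'"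
        by (auto elim!: ured_OpE elim: sred.cases)
      then show "termip (ured c sf) y"
        using accI.hyps(2) by (auto intro: listrel1I simp: conversep_iff[abs_def])
    qed
  qed
qed

section \<open>Normalization\<close>

lemma ipar_from_Lam: "ipar c sf (Lam M) N \<Longrightarrow> \<exists>M'. N = Lam M' \<and> (red c)\<^sup>*\<^sup>* M M'"
  by (erule ipar_LamE) (auto dest: ipar_imp_par par_imp_reds)

lemma ipar_from_App:
  "ipar c sf (App M1 M2) N \<Longrightarrow> \<exists>N1 N2. N = App N1 N2 \<and> (red c)\<^sup>*\<^sup>* M1 N1 \<and> (red c)\<^sup>*\<^sup>* M2 N2"
  by (erule ipar_AppE) (auto dest: ipar_imp_par par_imp_reds)

lemma ipar_from_Op: "ipar c sf (Op g ts) N \<Longrightarrow> \<exists>ts'. N = Op g ts' \<and> list_all2 (red c)\<^sup>*\<^sup>* ts ts'"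
  by (erule ipar_OpE) (auto elim!: list_all2_mono dest: par_imp_reds)

lemma ipars_from_Lam: "(ipar c sf)\<^sup>*\<^sup>* (Lam a) n \<Longrightarrow> \<exists>n1. n = Lam n1 \<and> (red c)\<^sup>*\<^sup>* a n1"
  by (induct rule: rtranclp_induct) (auto dest!: ipar_from_Lam intro: rtranclp_trans)

lemma ipars_from_App:
  "(ipar c sf)\<^sup>*\<^sup>* (App a b) n \<Longrightarrow> \<exists>n1 n2. n = App n1 n2 \<and> (red c)\<^sup>*\<^sup>* a n1 \<and> (red c)\<^sup>*\<^sup>* b n2"
  by (induct rule: rtranclp_induct) (auto dest!: ipar_from_App intro: rtranclp_trans)

lemma ipars_from_Op:
  "(ipar c sf)\<^sup>*\<^sup>* (Op g ts) n \<Longrightarrow> \<exists>ns. n = Op g ns \<and> list_all2 (red c)\<^sup>*\<^sup>* ts ns"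
proof (induct rule: rtranclp_induct)
  case base
  then show ?case by (auto intro: list.rel_refl)
next
  case (step y z)
  then obtain ys zs where "list_all2 (red c)\<^sup>*\<^sup>* ts ys" "z = Op g zs" "list_all2 (red c)\<^sup>*\<^sup>* ys zs"
    by (auto dest!: ipar_from_Op)
  then show ?case by (auto intro: list_all2_trans[OF rtranclp_trans])
qed

lemma normal_red_Lam: "normal (red c) (Lam a) \<Longrightarrow> normal (red c) a"
  unfolding normal_def by (auto intro: red_lam)

lemma normal_red_App: "normal (red c) (App a b) \<Longrightarrow> normal (red c) a \<and> normal (red c) b"
  unfolding normal_def by (auto intro: red_appL red_appR)

lemma normal_red_Op: "normal (red c) (Op g ns) \<Longrightarrow> n \<in> set ns \<Longrightarrow> normal (red c) n"
  unfolding normal_def by (auto intro: red_op dest: split_list)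

lemma termip_ured_surface_normal:
  fixes t n :: "'o tm"
  assumes "surface_normal c sf t" "(ipar c sf)\<^sup>*\<^sup>* t n" "normal (red c) n" "admissible c sf"
    and IH: "\<And>s n' :: 'o tm. size n' < size n \<Longrightarrow> normal (red c) n' \<Longrightarrow> (red c)\<^sup>*\<^sup>* s n' \<Longrightarrow>
      termip (ured c sf) s"
  shows "termip (ured c sf) t"
proof (cases t)
  case (Var i)
  show ?thesis unfolding Var by (rule accpI) (auto elim!: ured_VarE sred_VarE simp: root_iff)
next
  case (Lam a)
  obtain n1 where "n = Lam n1" "(red c)\<^sup>*\<^sup>* a n1"
    using ipars_from_Lam[OF assms(2)[unfolded Lam]] by blast
  moreover have "normal (red c) n1" using assms(3) unfolding \<open>n = Lam n1\<close> by (rule normal_red_Lam)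
  ultimately have "termip (ured c sf) a" by (intro IH[of n1]) simp_all
  with assms(1,4) show ?thesis unfolding Lam by (intro termip_ured_Lam)
next
  case (App a b)
  obtain n1 n2 where n: "n = App n1 n2" and reds: "(red c)\<^sup>*\<^sup>* a n1" "(red c)\<^sup>*\<^sup>* b n2"
    using ipars_from_App[OF assms(2)[unfolded App]] by blast
  have nf: "normal (red c) n1" "normal (red c) n2"
    using normal_red_App assms(3) unfolding n by blast+
  have "termip (ured c sf) a" by (rule IH[of n1]) (simp_all add: n reds nf)
  moreover have "termip (ured c sf) b" by (rule IH[of n2]) (simp_all add: n reds nf)
  ultimately show ?thesis using assms(1,4) unfolding App by (intro termip_ured_App)
next
  case (Op g ts)
  obtain ns where ns: "n = Op g ns" "list_all2 (red c)\<^sup>*\<^sup>* ts ns"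
    using ipars_from_Op[OF assms(2)[unfolded Op]] by blast
  have "termip (ured c sf) x" if x: "x \<in> set ts" for x
  proof -
    obtain i where i: "i < length ts" "x = ts ! i" using x by (metis in_set_conv_nth)
    with ns(2) have n_i: "ns ! i \<in> set ns" and "(red c)\<^sup>*\<^sup>* x (ns ! i)"
      by (auto simp: list_all2_conv_all_nth)
    moreover have "size (ns ! i) \<le> size_list size ns"
      using n_i by (rule size_list_estimation') simp
    then have "size (ns ! i) < size n" unfolding ns(1) by simp
    moreover have "normal (red c) (ns ! i)"
      using assms(3) n_i unfolding ns(1) by (rule normal_red_Op)
    ultimately show ?thesis using IH by blast
  qed
  then show ?thesis unfolding Op by (simp add: termip_ured_Op)
qed

theorem termip_ured_if_normalizing:
  fixes t n :: "'o tm"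
  shows "(red c)\<^sup>*\<^sup>* t n \<Longrightarrow> normal (red c) n \<Longrightarrow> admissible c sf \<Longrightarrow> termip (ured c sf) t"
proof (induct n arbitrary: t rule: measure_induct_rule[of size])
  case (less n)
  then obtain t0 where t0: "(sred c sf)\<^sup>*\<^sup>* t t0" "(ipar c sf)\<^sup>*\<^sup>* t0 n"
    by (blast dest: reds_factor)
  have "normal (sred c sf) n" using less.prems(2) unfolding normal_def by (blast dest: sred_imp_red)
  then have t0_normal: "surface_normal c sf t0"
    using t0(2) ipars_reflect_surface_normal by (simp add: normal_sred_iff)
  have IH: "termip (ured c sf) s"
    if "size n' < size n" "normal (red c) n'" "(red c)\<^sup>*\<^sup>* s n'" for s n' :: "'o tm"
    using less.hyps that less.prems(3) by blast
  have "termip (ured c sf) t0"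
    using t0_normal t0(2) less.prems(2,3) IH by (rule termip_ured_surface_normal)
  moreover have "normal (sred c sf) t0" using t0_normal by (simp add: normal_sred_iff)
  ultimately show ?case
    using quasi_diamond_termip[OF sred_quasi_diamond[OF less.prems(3)] t0(1)] ured_sred by blast
qed

theorem mainTheorem5:
  fixes Ops :: "'o set" and ar :: "'o \<Rightarrow> nat"
  assumes "admissible c sf"
  shows "normalizing_strategy_on {t :: 'o tm. wf Ops ar t} (ured c sf) (red c)"
  unfolding normalizing_strategy_on_def
proof (intro conjI ballI allI impI)
  fix t u :: "'o tm"
  show "ured c sf t u \<Longrightarrow> red c t u" by (rule ured_imp_red)
  show "normal (ured c sf) t = normal (red c) t" by (rule normal_ured_iff)
  show "(ured c sf)\<^sup>*\<^sup>* t u \<and> normal (ured c sf) u \<Longrightarrow> normal (red c) u"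
    by (simp add: normal_ured_iff)
  assume "\<exists>u. (red c)\<^sup>*\<^sup>* t u \<and> normal (red c) u"
  then have "termip (ured c sf) t" using termip_ured_if_normalizing assms by blast
  then show "\<nexists>f. f 0 = t \<and> (\<forall>n. ured c sf (f n) (f (Suc n)))"
    by (rule termip_imp_no_infinite_chain)
qed

end
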